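(* Let $1<p\le2$ and let $\phi$ be an Orlicz function with $\alpha_\phi>0$. If the Orlicz space $L_\phi$ has type $p$, then $\phi$ satisfies condition $\Delta_2$.
   Context: $(\Omega,\Sigma,\mu)$ is one of: (A) a non-atomic measure space with $\mu(\Omega)=\infty$; (B) a non-atomic measure space with $\mu(\Omega)<\infty$; (C) $\mathbb{N}$ with counting measure. Growth conditions and indices are taken for all arguments in case (A), for large arguments in case (B), and for small arguments in case (C). An Orlicz function is $\phi:[0,\infty)\to[0,\infty)$ with $\phi(0)=0$, strictly increasing, continuous, $\lim_{u\to\infty}\phi(u)=\infty$. $\phi\in\Delta_2$ means there exist $K>0$ (and $v\ge0$ in case (B), $v>0$ in case (C)) with $\phi(2u)\le K\phi(u)$ for all $u\ge0$ (A), $u\ge v$ (B), $u\le v$ (C). $\alpha_\phi=\sup\{r:\exists c>0$ (and $v$) with $\phi(au)\ge ca^r\phi(u)$ for all $a\ge1$ and $u\ge0$ (A), $u\ge v$ (B), $0<u\le au\le v$ (C)$\}$. $L_\phi$ is the set of measurable $f$ with $\int\phi(\lambda|f|)\,d\mu<\infty$ for some $\lambda>0$, quasi-normed by $\|f\|=\inf\{\varepsilon>0:\int\phi(|f|/\varepsilon)\,d\mu\le1\}$. With Rademacher functions $r_k(t)=\operatorname{sign}(\sin2^k\pi t)$, a quasi-Banach space $X$ has type $p$ if there is $K>0$ with $\int_0^1\|\sum_{k=1}^n r_k(t)x_k\|\,dt\le K(\sum_{k=1}^n\|x_k\|^p)^{1/p}$ for all $x_1,\dots,x_n\in X$. *)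

theory Defs
  imports "HOL-Analysis.Analysis"
begin

datatype msetting = CaseA | CaseB | CaseC

definition is_atom :: "'a measure \<Rightarrow> 'a set \<Rightarrow> bool" where
  "is_atom M A \<longleftrightarrow> A \<in> sets M \<and> 0 < emeasure M A \<and>
     (\<forall>B\<in>sets M. B \<subseteq> A \<longrightarrow> emeasure M B = 0 \<or> emeasure M (A - B) = 0)"

definition nonatomic :: "'a measure \<Rightarrow> bool" where
  "nonatomic M \<longleftrightarrow> (\<nexists>A. is_atom M A)"

definition measure_setting :: "msetting \<Rightarrow> 'a measure \<Rightarrow> bool" where
  "measure_setting s M = (case s of
      CaseA \<Rightarrow> nonatomic M \<and> sigma_finite_measure M \<and> emeasure M (space M) = \<infinity>
    | CaseB \<Rightarrow> nonatomic M \<and> 0 < emeasure M (space M) \<and> emeasure M (space M) < \<infinity>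
    | CaseC \<Rightarrow> M = count_space (space M) \<and> infinite (space M) \<and> countable (space M))"

definition orlicz_function :: "(real \<Rightarrow> real) \<Rightarrow> bool" where
  "orlicz_function \<phi> \<longleftrightarrow> \<phi> 0 = 0 \<and> (\<forall>u\<ge>0. 0 \<le> \<phi> u) \<and> strict_mono_on {0..} \<phi> \<and>
     continuous_on {0..} \<phi> \<and> filterlim \<phi> at_top at_top"

definition delta2 :: "msetting \<Rightarrow> (real \<Rightarrow> real) \<Rightarrow> bool" where
  "delta2 s \<phi> = (case s of
      CaseA \<Rightarrow> (\<exists>K>0. \<forall>u\<ge>0. \<phi> (2*u) \<le> K * \<phi> u)
    | CaseB \<Rightarrow> (\<exists>K>0. \<exists>v\<ge>0. \<forall>u\<ge>v. \<phi> (2*u) \<le> K * \<phi> u)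
    | CaseC \<Rightarrow> (\<exists>K>0. \<exists>v>0. \<forall>u. 0 \<le> u \<and> u \<le> v \<longrightarrow> \<phi> (2*u) \<le> K * \<phi> u))"

definition alpha_set :: "msetting \<Rightarrow> (real \<Rightarrow> real) \<Rightarrow> real set" where
  "alpha_set s \<phi> = {r. \<exists>c>0. (case s of
      CaseA \<Rightarrow> (\<forall>a\<ge>1. \<forall>u\<ge>0. \<phi> (a*u) \<ge> c * a powr r * \<phi> u)
    | CaseB \<Rightarrow> (\<exists>v\<ge>0. \<forall>a\<ge>1. \<forall>u\<ge>v. \<phi> (a*u) \<ge> c * a powr r * \<phi> u)
    | CaseC \<Rightarrow> (\<exists>v>0. \<forall>a\<ge>1. \<forall>u. 0 < u \<and> a*u \<le> v \<longrightarrow> \<phi> (a*u) \<ge> c * a powr r * \<phi> u))}"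

definition alpha_idx :: "msetting \<Rightarrow> (real \<Rightarrow> real) \<Rightarrow> ereal" where
  "alpha_idx s \<phi> = Sup (ereal ` alpha_set s \<phi>)"

definition orlicz_space :: "'a measure \<Rightarrow> (real \<Rightarrow> real) \<Rightarrow> ('a \<Rightarrow> real) set" where
  "orlicz_space M \<phi> = {f \<in> borel_measurable M.
      \<exists>c>0. (\<integral>\<^sup>+ x. ennreal (\<phi> (c * \<bar>f x\<bar>)) \<partial>M) < \<infinity>}"

definition orlicz_norm :: "'a measure \<Rightarrow> (real \<Rightarrow> real) \<Rightarrow> ('a \<Rightarrow> real) \<Rightarrow> real" where
  "orlicz_norm M \<phi> f = Inf {\<epsilon>. \<epsilon> > 0 \<and> (\<integral>\<^sup>+ x. ennreal (\<phi> (\<bar>f x\<bar> / \<epsilon>)) \<partial>M) \<le> 1}"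

definition rademacher :: "nat \<Rightarrow> real \<Rightarrow> real" where
  "rademacher k t = sgn (sin (2 ^ k * pi * t))"

definition orlicz_has_type :: "'a measure \<Rightarrow> (real \<Rightarrow> real) \<Rightarrow> real \<Rightarrow> bool" where
  "orlicz_has_type M \<phi> p \<longleftrightarrow> (\<exists>K>0. \<forall>n::nat. \<forall>x::nat \<Rightarrow> 'a \<Rightarrow> real.
      (\<forall>k\<in>{1..n}. x k \<in> orlicz_space M \<phi>) \<longrightarrow>
      (\<integral>\<^sup>+ t\<in>{0..1}. ennreal (orlicz_norm M \<phi> (\<lambda>\<omega>. \<Sum>k=1..n. rademacher k t * x k \<omega>)) \<partial>lborel)
        \<le> ennreal (K * (\<Sum>k=1..n. orlicz_norm M \<phi> (x k) powr p) powr (1/p)))"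

end

theory Submission
  imports Defs
begin

text \<open>If \<open>\<Delta>\<^sub>2\<close> fails, then for every \<open>n\<close> there is a \<open>u\<close>, in the range of arguments that
  matters for the setting, with \<open>\<phi> (2 u) > 2^(n+1) \<phi> u\<close>. Choose \<open>2^n\<close> disjoint sets \<open>A S\<close>,
  indexed by \<open>S \<subseteq> {1..n}\<close>, each of measure between \<open>1 / \<phi> (2 u)\<close> and \<open>2 / \<phi> (2 u)\<close>: this
  uses non-atomicity in settings (A) and (B), and \<open>\<phi> (2 u) \<le> 1\<close> for small \<open>u\<close> in setting (C).
  Let \<open>x k\<close> be \<open>2 u\<close> on \<open>A S\<close> if \<open>k \<in> S\<close> and \<open>-2 u\<close> otherwise. Every \<open>x k\<close> has norm at
  most 2, whereas for almost every \<open>t\<close> the Rademacher sum \<open>\<Sum>k. r k t * x k\<close> equals \<open>2 n u\<close>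
  on the piece whose sign pattern is that of \<open>(r k t)\<^sub>k\<close>, so its norm is at least \<open>n\<close>.
  Type \<open>p\<close> then gives \<open>n \<le> K (n 2^p)^(1/p) = 2 K n^(1/p)\<close>, false for large \<open>n\<close> as \<open>p > 1\<close>.\<close>

lemma orlicz_function_mono:
  assumes "orlicz_function \<phi>" "0 \<le> x" "x \<le> y"
  shows "\<phi> x \<le> \<phi> y"
  using assms unfolding orlicz_function_def strict_mono_on_def
  by (metis atLeast_iff order.trans order_le_less)

lemma orlicz_function_strict_mono:
  assumes "orlicz_function \<phi>" "0 \<le> x" "x < y"
  shows "\<phi> x < \<phi> y"
  using assms unfolding orlicz_function_def strict_mono_on_def by auto

lemma orlicz_function_pos:
  assumes "orlicz_function \<phi>" "0 < u"
  shows "0 < \<phi> u"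
  using orlicz_function_strict_mono[OF assms(1) order_refl assms(2)] assms(1)
  by (simp add: orlicz_function_def)

lemma orlicz_gap_pos:
  assumes "orlicz_function \<phi>" "0 \<le> u" "N * \<phi> u < \<phi> (2 * u)"
  shows "0 < u"
  using assms by (cases "u = 0") (auto simp: orlicz_function_def)

lemma orlicz_function_exists_le_1:
  assumes "orlicz_function \<phi>"
  obtains v where "0 < v" "\<phi> v \<le> 1"
proof -
  have "continuous_on {0..} \<phi>" "\<phi> 0 = 0" using assms by (auto simp: orlicz_function_def)
  then obtain d where "0 < d" "\<And>x. 0 \<le> x \<Longrightarrow> \<bar>x\<bar> < d \<Longrightarrow> \<bar>\<phi> x\<bar> < 1"
    unfolding continuous_on_iff dist_real_def by (metis atLeast_iff diff_zero order_refl zero_less_one)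
  then have "\<bar>\<phi> (d / 2)\<bar> < 1" by simp
  then show thesis using that[of "d / 2"] \<open>0 < d\<close> by simp
qed

lemma nonatomic_exists_half_subset:
  assumes "nonatomic M" "F \<in> fmeasurable M" "0 < measure M F"
  obtains G where "G \<in> sets M" "G \<subseteq> F" "0 < measure M G" "measure M G \<le> measure M F / 2"
proof -
  have "\<not> is_atom M F" "0 < emeasure M F"
    using assms by (auto simp: nonatomic_def emeasure_eq_measure2)
  then obtain B where B: "B \<in> sets M" "B \<subseteq> F" "emeasure M B \<noteq> 0" "emeasure M (F - B) \<noteq> 0"
    using assms(2) unfolding is_atom_def by auto
  have fin: "B \<in> fmeasurable M" "F - B \<in> fmeasurable M"
    using B assms(2) by (auto intro: fmeasurableI2)
  then have pos: "0 < measure M B" "0 < measure M (F - B)"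
    using B by (auto simp: emeasure_eq_measure2 zero_less_measure_iff)
  have "measure M F = measure M B + measure M (F - B)"
    using B assms(2) by (simp add: measure_Diff fmeasurableD2)
  then show thesis
    using that[of B] that[of "F - B"] B pos fin by (cases "measure M B \<le> measure M F / 2") auto
qed

lemma nonatomic_exists_small_subset:
  assumes na: "nonatomic M" and F: "F \<in> fmeasurable M" "0 < measure M F" and d: "0 < d"
  obtains G where "G \<in> sets M" "G \<subseteq> F" "0 < measure M G" "measure M G \<le> d"
proof -
  have "\<exists>G\<in>sets M. G \<subseteq> F \<and> 0 < measure M G \<and> measure M G \<le> measure M F / 2 ^ k" for k
  proof (induction k)
    case (Suc k)
    then obtain G where G: "G \<in> sets M" "G \<subseteq> F" "0 < measure M G" "measure M G \<le> measure M F / 2 ^ k"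
      by blast
    then have "G \<in> fmeasurable M" using F by (auto intro: fmeasurableI2)
    then obtain H where "H \<in> sets M" "H \<subseteq> G" "0 < measure M H" "measure M H \<le> measure M G / 2"
      using na G nonatomic_exists_half_subset by metis
    moreover have "measure M G / 2 \<le> measure M F / 2 ^ Suc k"
      using G(4) by (simp add: divide_right_mono)
    ultimately show ?case
      using G by (intro bexI[of _ H]) auto
  qed (use F in auto)
  moreover obtain k where "measure M F / d < 2 ^ k"
    using real_arch_pow[of 2] by auto
  then have "measure M F / 2 ^ k \<le> d" using d by (simp add: field_simps)
  ultimately show thesis using that by (meson order.trans)
qed

lemma exists_max_measure_Union_closed:
  assumes sets: "\<G> \<subseteq> sets M" and ne: "\<G> \<noteq> {}" and E: "E \<in> fmeasurable M"
    and sub: "\<And>G. G \<in> \<G> \<Longrightarrow> G \<subseteq> E"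
    and Union: "\<And>G :: nat \<Rightarrow> 'a set. range G \<subseteq> \<G> \<Longrightarrow> (\<Union>i. G i) \<in> \<G>"
  obtains V where "V \<in> \<G>" "\<And>G. G \<in> \<G> \<Longrightarrow> measure M G \<le> measure M V"
proof -
  have le_E: "measure M G \<le> measure M E" if "G \<in> \<G>" for G
    using that sets sub E by (intro measure_mono_fmeasurable) auto
  define s where "s = Sup (measure M ` \<G>)"
  have bdd: "bdd_above (measure M ` \<G>)"
    using le_E by (intro bdd_aboveI) auto
  have upper: "measure M G \<le> s" if "G \<in> \<G>" for G
    unfolding s_def using that bdd by (intro cSup_upper) auto
  have "\<exists>G\<in>\<G>. s - 1 / Suc i < measure M G" for i
    using less_cSup_iff[of "measure M ` \<G>" "s - 1 / Suc i"] ne bdd by (auto simp: s_def)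
  then obtain G where G: "\<And>i. G i \<in> \<G>" "\<And>i. s - 1 / Suc i < measure M (G i)"
    by metis
  define V where "V = (\<Union>i. G i)"
  have V: "V \<in> \<G>" unfolding V_def using G(1) by (intro Union) auto
  have "V \<in> fmeasurable M" using V sets sub E by (auto intro: fmeasurableI2)
  then have le_V: "measure M (G i) \<le> measure M V" for i
    using G(1) sets unfolding V_def by (intro measure_mono_fmeasurable) auto
  have "s - 1 / Suc i \<le> measure M V" for i
    using G(2)[of i] le_V[of i] by linarith
  moreover have "(\<lambda>i. s - 1 / Suc i) \<longlonglongrightarrow> s"
    using tendsto_diff[OF tendsto_const LIMSEQ_inverse_real_of_nat] by (simp add: inverse_eq_divide)
  ultimately have "s \<le> measure M V"
    by (intro LIMSEQ_le_const2) auto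
  with V upper show thesis using that by fastforce
qed

lemma Union_measure_below_closed_if_gap:
  fixes G :: "nat \<Rightarrow> 'a set"
  assumes E: "E \<in> fmeasurable M"
    and gap: "\<And>B. B \<in> sets M \<Longrightarrow> B \<subseteq> E \<Longrightarrow> measure M B < a \<or> 2 * a < measure M B"
    and G: "\<And>i. G i \<in> sets M" "\<And>i. G i \<subseteq> E" "\<And>i. measure M (G i) < a"
  shows "measure M (\<Union>i. G i) < a"
proof -
  have a: "0 < a" using order.strict_trans1[OF measure_nonneg G(3)[of 0]] .
  have fin: "B \<in> fmeasurable M" if "B \<in> sets M" "B \<subseteq> E" for B
    using E that by (auto intro: fmeasurableI2)
  have partial: "measure M (\<Union>i<k. G i) < a" for k
  proof (induction k)
    case (Suc k)
    have U: "(\<Union>i<Suc k. G i) \<in> sets M" "(\<Union>i<Suc k. G i) \<subseteq> E" using G by auto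
    have "measure M (\<Union>i<Suc k. G i) \<le> measure M (G k) + measure M (\<Union>i<k. G i)"
      unfolding lessThan_Suc UN_insert using G by (intro measure_Un_le) auto
    then show ?case
      using gap[OF U] G(3)[of k] Suc.IH by linarith
  qed (simp add: a)
  have U: "(\<Union>k. \<Union>i<k. G i) = (\<Union>i. G i)" "(\<Union>i. G i) \<in> sets M" "(\<Union>i. G i) \<subseteq> E"
    using G by auto
  have "(\<lambda>k. measure M (\<Union>i<k. G i)) \<longlonglongrightarrow> measure M (\<Union>k. \<Union>i<k. G i)"
  proof (rule Lim_measure_incseq)
    show "incseq (\<lambda>k. \<Union>i<k. G i)"
      unfolding incseq_def by (meson UN_mono lessThan_subset_iff order_refl)
    show "emeasure M (\<Union>k. \<Union>i<k. G i) \<noteq> \<infinity>"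
      unfolding U(1) using fin[OF U(2,3)] by (simp add: fmeasurableD2)
  qed (use G in auto)
  then have "measure M (\<Union>i. G i) \<le> a"
    using partial U(1) by (intro LIMSEQ_le_const2) (auto simp: less_imp_le)
  moreover have "measure M (\<Union>i. G i) < a \<or> 2 * a < measure M (\<Union>i. G i)" by (rule gap[OF U(2,3)])
  ultimately show ?thesis using a by linarith
qed

lemma nonatomic_exists_subset_measure_between:
  assumes na: "nonatomic M" and E: "E \<in> fmeasurable M" and a: "0 < a"
    and big: "2 * a \<le> measure M E"
  obtains B where "B \<in> sets M" "B \<subseteq> E" "a \<le> measure M B" "measure M B \<le> 2 * a"
proof -
  have "\<exists>B\<in>sets M. B \<subseteq> E \<and> a \<le> measure M B \<and> measure M B \<le> 2 * a"
  proof (rule ccontr)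
    txt \<open>Without such a \<open>B\<close>, the sets of measure \<open>< a\<close> are closed under countable unions, so
      one of them, \<open>V\<close>, has maximal measure; but \<open>E - V\<close> still contains a set \<open>H\<close> of small
      positive measure, and \<open>V \<union> H\<close> contradicts the maximality of \<open>V\<close>.\<close>
    assume "\<not> ?thesis"
    then have gap: "measure M B < a \<or> 2 * a < measure M B" if "B \<in> sets M" "B \<subseteq> E" for B
      using that by (meson not_le)
    define \<G> where "\<G> = {G \<in> sets M. G \<subseteq> E \<and> measure M G < a}"
    obtain V where V: "V \<in> sets M" "V \<subseteq> E" "measure M V < a"
      and max: "\<And>G. G \<in> \<G> \<Longrightarrow> measure M G \<le> measure M V"
    proof (rule exists_max_measure_Union_closed[of \<G> M E])
      show "(\<Union>i. G i) \<in> \<G>" if "range G \<subseteq> \<G>" for G :: "nat \<Rightarrow> 'a set"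
        using that Union_measure_below_closed_if_gap[OF E gap, of G] by (auto simp: \<G>_def)
    qed (use E a in \<open>auto simp: \<G>_def\<close>)
    have "measure M (E - V) = measure M E - measure M V"
      using E V by (simp add: measure_Diff fmeasurableD2)
    then have "0 < measure M (E - V)" using V big a by linarith
    then obtain H where H: "H \<in> sets M" "H \<subseteq> E - V" "0 < measure M H" "measure M H \<le> a"
      using nonatomic_exists_small_subset[OF na fmeasurable_Diff[OF E V(1)] _ a] by blast
    have "V \<in> fmeasurable M" "H \<in> fmeasurable M"
      using V H by (auto intro: fmeasurableI2[OF E])
    then have VH: "measure M (V \<union> H) = measure M V + measure M H"
      using H by (intro measure_Union) (auto simp: fmeasurable_def)
    then have "V \<union> H \<in> \<G>"
      using gap[of "V \<union> H"] V H by (auto simp: \<G>_def)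
    then show False using max[of "V \<union> H"] VH H by simp
  qed
  then show thesis using that by blast
qed

lemma nonatomic_disjoint_family_measure_between:
  fixes a :: real
  assumes na: "nonatomic M" and E: "E \<in> fmeasurable M" and a: "0 < a" and I: "finite I"
    and big: "2 * a * card I \<le> measure M E"
  shows "\<exists>A. disjoint_family_on A I \<and>
           (\<forall>i\<in>I. A i \<in> sets M \<and> A i \<subseteq> E \<and> a \<le> measure M (A i) \<and> measure M (A i) \<le> 2 * a)"
  using I big
proof (induction I rule: finite_induct)
  case empty
  show ?case by (auto simp: disjoint_family_on_def)
next
  case (insert i I)
  then obtain A where dA: "disjoint_family_on A I"
    and A: "\<forall>j\<in>I. A j \<in> sets M \<and> A j \<subseteq> E \<and> a \<le> measure M (A j) \<and> measure M (A j) \<le> 2 * a"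
    using a by (fastforce simp: algebra_simps)
  define W where "W = (\<Union>j\<in>I. A j)"
  have W: "W \<in> sets M" "W \<subseteq> E" using A insert.hyps(1) by (auto simp: W_def)
  have "measure M W \<le> (\<Sum>j\<in>I. measure M (A j))"
    unfolding W_def using A by (intro measure_UNION_le insert.hyps(1)) auto
  also have "\<dots> \<le> 2 * a * card I"
    using sum_bounded_above[of I "\<lambda>j. measure M (A j)" "2 * a"] A by (simp add: mult_ac)
  finally have big': "2 * a \<le> measure M (E - W)"
    using insert.hyps insert.prems E W by (simp add: measure_Diff fmeasurableD2 algebra_simps)
  then obtain B where B: "B \<in> sets M" "B \<subseteq> E - W" "a \<le> measure M B" "measure M B \<le> 2 * a"
    using nonatomic_exists_subset_measure_between[OF na fmeasurable_Diff[OF E W(1)] a big'] by blast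
  show ?case
  proof (intro exI conjI ballI)
    show "disjoint_family_on (A(i := B)) (insert i I)"
      using dA B(2) insert.hyps(2)
      by (subst disjoint_family_on_insert) (auto simp: W_def disjoint_family_on_def)
    fix j assume "j \<in> insert i I"
    then show "(A(i := B)) j \<in> sets M" "(A(i := B)) j \<subseteq> E"
      "a \<le> measure M ((A(i := B)) j)" "measure M ((A(i := B)) j) \<le> 2 * a"
      using A B by (cases "j = i"; auto)+
  qed
qed

lemma infinite_disjoint_family_card:
  assumes X: "infinite X" and I: "finite I"
  shows "\<exists>A. disjoint_family_on A I \<and> (\<forall>i\<in>I. A i \<subseteq> X \<and> finite (A i) \<and> card (A i) = q)"
  using I
proof (induction I rule: finite_induct)
  case empty
  show ?case by (auto simp: disjoint_family_on_def)
next
  case (insert i I)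
  then obtain A where dA: "disjoint_family_on A I"
    and A: "\<forall>j\<in>I. A j \<subseteq> X \<and> finite (A j) \<and> card (A j) = q"
    by blast
  have "infinite (X - (\<Union>j\<in>I. A j))"
    using X A insert.hyps(1) by (auto intro: Diff_infinite_finite)
  then obtain B where B: "finite B" "card B = q" "B \<subseteq> X - (\<Union>j\<in>I. A j)"
    using infinite_arbitrarily_large by blast
  show ?case
  proof (intro exI conjI ballI)
    show "disjoint_family_on (A(i := B)) (insert i I)"
      using dA B(3) insert.hyps(2)
      by (subst disjoint_family_on_insert) (auto simp: disjoint_family_on_def)
    fix j assume "j \<in> insert i I"
    then show "(A(i := B)) j \<subseteq> X" "finite ((A(i := B)) j)" "card ((A(i := B)) j) = q"
      using A B by (cases "j = i"; auto)+
  qed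
qed

lemma nn_integral_orlicz_le_of_bound:
  assumes orl: "orlicz_function \<phi>" and e: "0 < e" and B: "0 \<le> B" and U: "U \<in> fmeasurable M"
    and f: "\<And>\<omega>. \<bar>f \<omega>\<bar> \<le> B * indicator U \<omega>"
  shows "(\<integral>\<^sup>+ \<omega>. ennreal (\<phi> (\<bar>f \<omega>\<bar> / e)) \<partial>M) \<le> ennreal (\<phi> (B / e) * measure M U)"
proof -
  have "(\<integral>\<^sup>+ \<omega>. ennreal (\<phi> (\<bar>f \<omega>\<bar> / e)) \<partial>M) \<le> (\<integral>\<^sup>+ \<omega>. ennreal (\<phi> (B / e)) * indicator U \<omega> \<partial>M)"
  proof (rule nn_integral_mono)
    fix \<omega>
    show "ennreal (\<phi> (\<bar>f \<omega>\<bar> / e)) \<le> ennreal (\<phi> (B / e)) * indicator U \<omega>"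
    proof (cases "\<omega> \<in> U")
      case True
      then have "\<bar>f \<omega>\<bar> / e \<le> B / e" using f[of \<omega>] e by (simp add: divide_right_mono)
      then show ?thesis
        using True orlicz_function_mono[OF orl] e by (simp add: ennreal_leI)
    qed (use f[of \<omega>] orl in \<open>simp add: orlicz_function_def\<close>)
  qed
  also have "\<dots> = ennreal (\<phi> (B / e) * measure M U)"
    using U orlicz_function_mono[OF orl, of 0 "B / e"] orl e B
    by (simp add: nn_integral_cmult_indicator emeasure_eq_measure2 ennreal_mult'' orlicz_function_def)
  finally show ?thesis .
qed

lemma orlicz_norm_le_of_bound:
  assumes orl: "orlicz_function \<phi>" and e: "0 < e" and B: "0 \<le> B" and U: "U \<in> fmeasurable M"
    and f: "\<And>\<omega>. \<bar>f \<omega>\<bar> \<le> B * indicator U \<omega>" and small: "\<phi> (B / e) * measure M U \<le> 1"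
  shows "0 \<le> orlicz_norm M \<phi> f" "orlicz_norm M \<phi> f \<le> e"
proof -
  have "(\<integral>\<^sup>+ \<omega>. ennreal (\<phi> (\<bar>f \<omega>\<bar> / e)) \<partial>M) \<le> 1"
    using nn_integral_orlicz_le_of_bound[OF assms(1-5)] small order_trans ennreal_leI
    by fastforce
  then have e_mem: "e \<in> {\<epsilon>. \<epsilon> > 0 \<and> (\<integral>\<^sup>+ \<omega>. ennreal (\<phi> (\<bar>f \<omega>\<bar> / \<epsilon>)) \<partial>M) \<le> 1}"
    using e by simp
  show "orlicz_norm M \<phi> f \<le> e"
    unfolding orlicz_norm_def by (rule cInf_lower[OF e_mem]) (auto intro: bdd_belowI[of _ 0])
  show "0 \<le> orlicz_norm M \<phi> f"
    unfolding orlicz_norm_def using e_mem by (intro cInf_greatest) auto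
qed

lemma orlicz_space_of_bound:
  assumes orl: "orlicz_function \<phi>" and B: "0 \<le> B" and U: "U \<in> fmeasurable M"
    and f: "\<And>\<omega>. \<bar>f \<omega>\<bar> \<le> B * indicator U \<omega>" and meas: "f \<in> borel_measurable M"
  shows "f \<in> orlicz_space M \<phi>"
proof -
  have "(\<integral>\<^sup>+ \<omega>. ennreal (\<phi> (1 * \<bar>f \<omega>\<bar>)) \<partial>M) < \<infinity>"
    using nn_integral_orlicz_le_of_bound[OF orl zero_less_one B U f]
    by (simp add: order.strict_trans1)
  then show ?thesis
    unfolding orlicz_space_def using meas by (auto intro!: exI[of _ 1])
qed

lemma orlicz_norm_ge_of_lower_bound:
  assumes orl: "orlicz_function \<phi>" and L: "0 < L" and b: "0 < b" and A: "A \<in> fmeasurable M"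
    and f: "\<And>\<omega>. \<omega> \<in> A \<Longrightarrow> b \<le> \<bar>f \<omega>\<bar>" and big: "1 \<le> \<phi> (b / L) * measure M A"
    and admissible: "0 < \<delta>" "(\<integral>\<^sup>+ \<omega>. ennreal (\<phi> (\<bar>f \<omega>\<bar> / \<delta>)) \<partial>M) \<le> 1"
  shows "L \<le> orlicz_norm M \<phi> f"
  unfolding orlicz_norm_def
proof (rule cInf_greatest)
  show "{\<epsilon>. \<epsilon> > 0 \<and> (\<integral>\<^sup>+ \<omega>. ennreal (\<phi> (\<bar>f \<omega>\<bar> / \<epsilon>)) \<partial>M) \<le> 1} \<noteq> {}"
    using admissible by blast
  fix e assume "e \<in> {\<epsilon>. \<epsilon> > 0 \<and> (\<integral>\<^sup>+ \<omega>. ennreal (\<phi> (\<bar>f \<omega>\<bar> / \<epsilon>)) \<partial>M) \<le> 1}"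
  then have e: "0 < e" and int: "(\<integral>\<^sup>+ \<omega>. ennreal (\<phi> (\<bar>f \<omega>\<bar> / e)) \<partial>M) \<le> 1"
    by auto
  show "L \<le> e"
  proof (rule ccontr)
    assume "\<not> L \<le> e"
    then have "\<phi> (b / L) < \<phi> (b / e)"
      using e L b by (intro orlicz_function_strict_mono[OF orl]) (auto simp: frac_less2)
    moreover have "measure M A \<noteq> 0" using big by auto
    then have "0 < measure M A" by (simp add: order_le_neq_trans)
    ultimately have "\<phi> (b / L) * measure M A < \<phi> (b / e) * measure M A"
      by (rule mult_strict_right_mono)
    with big have gt: "1 < \<phi> (b / e) * measure M A" by linarith
    have "ennreal (\<phi> (b / e) * measure M A) = (\<integral>\<^sup>+ \<omega>. ennreal (\<phi> (b / e)) * indicator A \<omega> \<partial>M)"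
      using A orlicz_function_pos[OF orl, of "b / e"] b e
      by (simp add: nn_integral_cmult_indicator emeasure_eq_measure2 ennreal_mult'')
    also have "\<dots> \<le> (\<integral>\<^sup>+ \<omega>. ennreal (\<phi> (\<bar>f \<omega>\<bar> / e)) \<partial>M)"
    proof (rule nn_integral_mono)
      fix \<omega>
      show "ennreal (\<phi> (b / e)) * indicator A \<omega> \<le> ennreal (\<phi> (\<bar>f \<omega>\<bar> / e))"
        using f[of \<omega>] e b orlicz_function_mono[OF orl, of "b / e" "\<bar>f \<omega>\<bar> / e"]
        by (cases "\<omega> \<in> A") (auto simp: ennreal_leI divide_right_mono)
    qed
    finally have "ennreal (\<phi> (b / e) * measure M A) \<le> 1"
      using int by (rule order_trans)
    then show False using gt by simp
  qed
qed

lemma abs_rademacher_le_1: "\<bar>rademacher k t\<bar> \<le> 1"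
  by (simp add: rademacher_def sgn_if)

lemma AE_rademacher_nonzero: "AE t in lborel. \<forall>k. rademacher k t \<noteq> 0"
proof -
  have "{t. \<exists>k. rademacher k t = 0} \<subseteq> (\<Union>k. range (\<lambda>i::int. of_int i / 2 ^ k))"
  proof safe
    fix t k assume "rademacher k t = 0"
    then obtain i :: int where "2 ^ k * t = of_int i"
      by (auto simp: rademacher_def sgn_0_0 sin_zero_iff_int2)
    then have "t = of_int i / 2 ^ k" by (simp add: field_simps)
    then show "t \<in> (\<Union>k. range (\<lambda>i::int. of_int i / 2 ^ k))" by blast
  qed
  then have "countable {t. \<exists>k. rademacher k t = 0}"
    by (rule countable_subset) auto
  then show ?thesis
    by (intro AE_I'[OF countable_imp_null_set_lborel]) auto
qed

lemma nn_integral_unit_interval_ge: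
  fixes g :: "real \<Rightarrow> real"
  assumes "AE t in lborel. a \<le> g t"
  shows "ennreal a \<le> (\<integral>\<^sup>+ t\<in>{0..1}. ennreal (g t) \<partial>lborel)"
proof -
  have "ennreal a = (\<integral>\<^sup>+ t. ennreal a * indicator {0..1::real} t \<partial>lborel)"
    by (simp add: nn_integral_cmult_indicator)
  also have "\<dots> \<le> (\<integral>\<^sup>+ t\<in>{0..1}. ennreal (g t) \<partial>lborel)"
    using assms by (intro nn_integral_mono_AE) (auto elim!: eventually_mono intro: mult_right_mono ennreal_leI)
  finally show ?thesis .
qed

text \<open>The pieces \<open>A S\<close> of the proof idea, with \<open>c = 2 u\<close>.\<close>

definition sign_test_family ::
    "'a measure \<Rightarrow> (real \<Rightarrow> real) \<Rightarrow> nat \<Rightarrow> real \<Rightarrow> (nat set \<Rightarrow> 'a set) \<Rightarrow> bool" where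
  "sign_test_family M \<phi> n c A \<longleftrightarrow> 0 < c \<and> disjoint_family_on A (Pow {1..n}) \<and>
     (\<forall>S\<in>Pow {1..n}. A S \<in> fmeasurable M \<and> 1 \<le> \<phi> c * measure M (A S)) \<and>
     \<phi> (c / 2) * measure M (\<Union>S\<in>Pow {1..n}. A S) \<le> 1"

definition sign_test_function :: "nat \<Rightarrow> real \<Rightarrow> (nat set \<Rightarrow> 'a set) \<Rightarrow> nat \<Rightarrow> 'a \<Rightarrow> real" where
  "sign_test_function n c A k \<omega> = (\<Sum>S\<in>Pow {1..n}. (if k \<in> S then c else - c) * indicator (A S) \<omega>)"

lemma sign_test_function_on_piece:
  assumes "disjoint_family_on A (Pow {1..n})" "S \<subseteq> {1..n}" "\<omega> \<in> A S"
  shows "sign_test_function n c A k \<omega> = (if k \<in> S then c else - c)"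
  unfolding sign_test_function_def using assms by (intro sum_indicator_disjoint_family) auto

lemma sign_test_function_outside:
  assumes "\<omega> \<notin> (\<Union>S\<in>Pow {1..n}. A S)"
  shows "sign_test_function n c A k \<omega> = 0"
  unfolding sign_test_function_def using assms by (intro sum.neutral) auto

lemma abs_sign_test_function_le:
  assumes "disjoint_family_on A (Pow {1..n})" "0 \<le> c"
  shows "\<bar>sign_test_function n c A k \<omega>\<bar> \<le> c * indicator (\<Union>S\<in>Pow {1..n}. A S) \<omega>"
  using assms sign_test_function_on_piece[OF assms(1)] sign_test_function_outside
  by (cases "\<omega> \<in> (\<Union>S\<in>Pow {1..n}. A S)") auto

lemma abs_rademacher_sum_sign_test_le:
  assumes "disjoint_family_on A (Pow {1..n})" "0 \<le> c"
  shows "\<bar>\<Sum>k=1..n. rademacher k t * sign_test_function n c A k \<omega>\<bar>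
           \<le> n * c * indicator (\<Union>S\<in>Pow {1..n}. A S) \<omega>"
proof -
  have "\<bar>\<Sum>k=1..n. rademacher k t * sign_test_function n c A k \<omega>\<bar>
          \<le> (\<Sum>k=1..n. \<bar>rademacher k t\<bar> * \<bar>sign_test_function n c A k \<omega>\<bar>)"
    by (metis (no_types, lifting) abs_mult sum.cong sum_abs)
  also have "\<dots> \<le> (\<Sum>k=1..n. 1 * (c * indicator (\<Union>S\<in>Pow {1..n}. A S) \<omega>))"
    using assms abs_rademacher_le_1 abs_sign_test_function_le
    by (intro sum_mono mult_mono) auto
  finally show ?thesis by simp
qed

lemma rademacher_sum_sign_test_on_matching_piece:
  assumes "disjoint_family_on A (Pow {1..n})" "\<forall>k. rademacher k t \<noteq> 0"
    and "\<omega> \<in> A {k \<in> {1..n}. 0 < rademacher k t}"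
  shows "(\<Sum>k=1..n. rademacher k t * sign_test_function n c A k \<omega>) = n * c"
proof -
  have "rademacher k t * sign_test_function n c A k \<omega> = c" if "k \<in> {1..n}" for k
  proof -
    have "sign_test_function n c A k \<omega> = (if 0 < rademacher k t then c else - c)"
      using sign_test_function_on_piece[OF assms(1) _ assms(3)] that by (simp add: subset_iff)
    moreover have "rademacher k t = 1 \<or> rademacher k t = - 1"
      using assms(2)[rule_format, of k] by (auto simp: rademacher_def sgn_if)
    ultimately show ?thesis by auto
  qed
  then show ?thesis by simp
qed

lemma sign_test_family_Union_fmeasurable:
  assumes "sign_test_family M \<phi> n c A"
  shows "(\<Union>S\<in>Pow {1..n}. A S) \<in> fmeasurable M"
  using assms by (intro fmeasurable.finite_UN) (auto simp: sign_test_family_def)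

lemma sign_test_function_in_orlicz_space:
  assumes orl: "orlicz_function \<phi>" and test: "sign_test_family M \<phi> n c A"
  shows "sign_test_function n c A k \<in> orlicz_space M \<phi>"
    and "0 \<le> orlicz_norm M \<phi> (sign_test_function n c A k)"
    and "orlicz_norm M \<phi> (sign_test_function n c A k) \<le> 2"
proof -
  have c: "0 < c" and dA: "disjoint_family_on A (Pow {1..n})"
    and small: "\<phi> (c / 2) * measure M (\<Union>S\<in>Pow {1..n}. A S) \<le> 1"
    using test by (auto simp: sign_test_family_def)
  note U = sign_test_family_Union_fmeasurable[OF test]
  note bound = abs_sign_test_function_le[OF dA less_imp_le[OF c], where k = k]
  have "sign_test_function n c A k \<in> borel_measurable M"
    using test unfolding sign_test_function_def sign_test_family_def
    by (intro borel_measurable_sum borel_measurable_times borel_measurable_const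
        borel_measurable_indicator) auto
  then show "sign_test_function n c A k \<in> orlicz_space M \<phi>"
    using orlicz_space_of_bound[OF orl _ U bound] c by simp
  show "0 \<le> orlicz_norm M \<phi> (sign_test_function n c A k)"
    and "orlicz_norm M \<phi> (sign_test_function n c A k) \<le> 2"
    using orlicz_norm_le_of_bound[OF orl _ _ U bound, where e = 2] c small by auto
qed

lemma orlicz_norm_rademacher_sum_sign_test_ge:
  assumes orl: "orlicz_function \<phi>" and test: "sign_test_family M \<phi> n c A" and n: "0 < n"
    and t: "\<forall>k. rademacher k t \<noteq> 0"
  shows "real n \<le> orlicz_norm M \<phi> (\<lambda>\<omega>. \<Sum>k=1..n. rademacher k t * sign_test_function n c A k \<omega>)"
proof -
  have c: "0 < c" and dA: "disjoint_family_on A (Pow {1..n})"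
    and pieces: "\<And>S. S \<subseteq> {1..n} \<Longrightarrow> A S \<in> fmeasurable M \<and> 1 \<le> \<phi> c * measure M (A S)"
    and small: "\<phi> (c / 2) * measure M (\<Union>S\<in>Pow {1..n}. A S) \<le> 1"
    using test by (auto simp: sign_test_family_def)
  define S where "S = {k \<in> {1..n}. 0 < rademacher k t}"
  have nc: "real n * c / real n = c" "real n * c / (2 * real n) = c / 2"
    using n by auto
  have "(\<integral>\<^sup>+ \<omega>. ennreal (\<phi> (\<bar>\<Sum>k=1..n. rademacher k t * sign_test_function n c A k \<omega>\<bar> / (2 * real n))) \<partial>M)
          \<le> ennreal (\<phi> (real n * c / (2 * real n)) * measure M (\<Union>S\<in>Pow {1..n}. A S))"
    using c n by (intro nn_integral_orlicz_le_of_bound[OF orl _ _ sign_test_family_Union_fmeasurable[OF test]]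
        abs_rademacher_sum_sign_test_le[OF dA]) auto
  also have "\<dots> \<le> 1" unfolding nc(2) ennreal_le_1 by (rule small)
  finally have admissible: "(\<integral>\<^sup>+ \<omega>. ennreal (\<phi> (\<bar>\<Sum>k=1..n. rademacher k t * sign_test_function n c A k \<omega>\<bar>
      / (2 * real n))) \<partial>M) \<le> 1" .
  have "S \<subseteq> {1..n}" unfolding S_def by blast
  then have piece: "A S \<in> fmeasurable M" "1 \<le> \<phi> c * measure M (A S)"
    using pieces by auto
  have "(\<Sum>k=1..n. rademacher k t * sign_test_function n c A k \<omega>) = n * c" if "\<omega> \<in> A S" for \<omega>
    using rademacher_sum_sign_test_on_matching_piece[OF dA t] that by (simp add: S_def)
  then show ?thesis
    using piece(2) nc(1) n c
    by (intro orlicz_norm_ge_of_lower_bound[OF orl _ _ piece(1) _ _ _ admissible, where b = "n * c"]) auto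
qed

definition orlicz_type_inequality :: "'a measure \<Rightarrow> (real \<Rightarrow> real) \<Rightarrow> real \<Rightarrow> real \<Rightarrow> bool" where
  "orlicz_type_inequality M \<phi> p K \<longleftrightarrow> (\<forall>n::nat. \<forall>x::nat \<Rightarrow> 'a \<Rightarrow> real.
      (\<forall>k\<in>{1..n}. x k \<in> orlicz_space M \<phi>) \<longrightarrow>
      (\<integral>\<^sup>+ t\<in>{0..1}. ennreal (orlicz_norm M \<phi> (\<lambda>\<omega>. \<Sum>k=1..n. rademacher k t * x k \<omega>)) \<partial>lborel)
        \<le> ennreal (K * (\<Sum>k=1..n. orlicz_norm M \<phi> (x k) powr p) powr (1/p)))"

lemma orlicz_has_type_iff: "orlicz_has_type M \<phi> p \<longleftrightarrow> (\<exists>K>0. orlicz_type_inequality M \<phi> p K)"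
  by (simp add: orlicz_has_type_def orlicz_type_inequality_def)

lemma sign_test_family_type_bound:
  assumes orl: "orlicz_function \<phi>" and test: "sign_test_family M \<phi> n c A" and n: "0 < n"
    and K: "0 < K" and p: "0 < p" and type: "orlicz_type_inequality M \<phi> p K"
  shows "real n \<le> K * (real n * 2 powr p) powr (1/p)"
proof -
  define x where "x = sign_test_function n c A"
  note x_props = sign_test_function_in_orlicz_space[OF orl test, folded x_def]
  have "AE t in lborel. real n \<le> orlicz_norm M \<phi> (\<lambda>\<omega>. \<Sum>k=1..n. rademacher k t * x k \<omega>)"
    using AE_rademacher_nonzero
    unfolding x_def by eventually_elim (rule orlicz_norm_rademacher_sum_sign_test_ge[OF orl test n])
  then have "ennreal n \<le> (\<integral>\<^sup>+ t\<in>{0..1}. ennreal (orlicz_norm M \<phi> (\<lambda>\<omega>. \<Sum>k=1..n. rademacher k t * x k \<omega>)) \<partial>lborel)"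
    by (rule nn_integral_unit_interval_ge)
  also have "\<dots> \<le> ennreal (K * (\<Sum>k=1..n. orlicz_norm M \<phi> (x k) powr p) powr (1/p))"
    using type x_props(1) unfolding orlicz_type_inequality_def by blast
  finally have "real n \<le> K * (\<Sum>k=1..n. orlicz_norm M \<phi> (x k) powr p) powr (1/p)"
    using K by (subst (asm) ennreal_le_iff) auto
  also have "\<dots> \<le> K * (real n * 2 powr p) powr (1/p)"
  proof -
    have "(\<Sum>k=1..n. orlicz_norm M \<phi> (x k) powr p) \<le> (\<Sum>k=1..n. 2 powr p)"
      using x_props(2,3) p by (intro sum_mono powr_mono2) auto
    then show ?thesis
      using K p by (intro mult_left_mono powr_mono2) (auto intro: sum_nonneg)
  qed
  finally show ?thesis .
qed

lemma sign_test_family_of_packing: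
  assumes orl: "orlicz_function \<phi>" and u: "0 < u" and gap: "2 ^ (n + 1) * \<phi> u \<le> \<phi> (2 * u)"
    and dA: "disjoint_family_on A (Pow {1..n})"
    and pieces: "\<And>S. S \<subseteq> {1..n} \<Longrightarrow>
      A S \<in> fmeasurable M \<and> 1 \<le> \<phi> (2 * u) * measure M (A S) \<and> \<phi> (2 * u) * measure M (A S) \<le> 2"
  shows "sign_test_family M \<phi> n (2 * u) A"
proof -
  have pos: "0 < \<phi> (2 * u)" "0 \<le> \<phi> u"
    using orlicz_function_pos[OF orl] u by (auto intro: less_imp_le)
  have fin: "A S \<in> fmeasurable M" if "S \<in> Pow {1..n}" for S
    using pieces that by blast
  have "measure M (\<Union>S\<in>Pow {1..n}. A S) = (\<Sum>S\<in>Pow {1..n}. measure M (A S))"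
  proof (rule measure_finite_Union)
    show "A ` Pow {1..n} \<subseteq> sets M" using fin by blast
    show "emeasure M (A S) \<noteq> \<infinity>" if "S \<in> Pow {1..n}" for S
      using fin[OF that] by (auto simp: fmeasurable_def)
  qed (use dA in auto)
  also have "\<dots> \<le> (\<Sum>S\<in>Pow {1..n}. 2 / \<phi> (2 * u))"
    using pieces pos by (intro sum_mono) (auto simp: field_simps)
  also have "\<dots> = 2 ^ (n + 1) / \<phi> (2 * u)"
    by (simp add: card_Pow)
  finally have "\<phi> u * measure M (\<Union>S\<in>Pow {1..n}. A S) \<le> \<phi> u * (2 ^ (n + 1) / \<phi> (2 * u))"
    using pos by (intro mult_left_mono) auto
  also have "\<dots> \<le> 1"
    using gap pos by (simp add: field_simps)
  finally show ?thesis
    using u dA pieces by (auto simp: sign_test_family_def)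
qed

lemma nonatomic_sign_test_family:
  assumes orl: "orlicz_function \<phi>" and na: "nonatomic M" and u: "0 < u"
    and gap: "2 ^ (n + 1) * \<phi> u \<le> \<phi> (2 * u)"
    and E: "E \<in> fmeasurable M" and big: "2 * 2 ^ n \<le> \<phi> (2 * u) * measure M E"
  obtains A where "sign_test_family M \<phi> n (2 * u) A"
proof -
  define a where "a = 1 / \<phi> (2 * u)"
  have pos: "0 < \<phi> (2 * u)" using orlicz_function_pos[OF orl] u by simp
  then have a: "0 < a" by (simp add: a_def)
  have "2 * a * card (Pow {1..n}) \<le> measure M E"
    using big pos by (simp add: a_def card_Pow field_simps)
  then obtain A where dA: "disjoint_family_on A (Pow {1..n})"
    and A: "\<forall>S\<in>Pow {1..n}. A S \<in> sets M \<and> A S \<subseteq> E \<and> a \<le> measure M (A S) \<and> measure M (A S) \<le> 2 * a"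
    using nonatomic_disjoint_family_measure_between[OF na E a] by blast
  have "sign_test_family M \<phi> n (2 * u) A"
  proof (rule sign_test_family_of_packing[OF orl u gap dA])
    fix S assume "S \<subseteq> {1..n}"
    then show "A S \<in> fmeasurable M \<and> 1 \<le> \<phi> (2 * u) * measure M (A S) \<and> \<phi> (2 * u) * measure M (A S) \<le> 2"
      using A pos E by (auto simp: a_def field_simps intro: fmeasurableI2)
  qed
  then show thesis by (rule that)
qed

lemma count_space_sign_test_family:
  assumes orl: "orlicz_function \<phi>" and M: "M = count_space X" and X: "infinite X" and u: "0 < u"
    and gap: "2 ^ (n + 1) * \<phi> u \<le> \<phi> (2 * u)" and small: "\<phi> (2 * u) \<le> 1"
  obtains A where "sign_test_family M \<phi> n (2 * u) A"
proof -
  define a where "a = 1 / \<phi> (2 * u)"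
  have pos: "0 < \<phi> (2 * u)" using orlicz_function_pos[OF orl] u by simp
  then have a: "1 \<le> a" using small by (simp add: a_def)
  define q where "q = nat \<lceil>a\<rceil>"
  have q: "a \<le> q" "q \<le> 2 * a" using a unfolding q_def by linarith+
  obtain A where dA: "disjoint_family_on A (Pow {1..n})"
    and A: "\<forall>S\<in>Pow {1..n}. A S \<subseteq> X \<and> finite (A S) \<and> card (A S) = q"
    using infinite_disjoint_family_card[OF X, of "Pow {1..n}" q] by auto
  have "sign_test_family M \<phi> n (2 * u) A"
  proof (rule sign_test_family_of_packing[OF orl u gap dA])
    fix S assume "S \<subseteq> {1..n}"
    then have "A S \<subseteq> X" "finite (A S)" "measure M (A S) = q" using A M by auto
    then show "A S \<in> fmeasurable M \<and> 1 \<le> \<phi> (2 * u) * measure M (A S) \<and> \<phi> (2 * u) * measure M (A S) \<le> 2"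
      using q pos M by (auto simp: a_def field_simps fmeasurable_def emeasure_count_space less_top[symmetric])
  qed
  then show thesis by (rule that)
qed

lemma sign_test_family_CaseA:
  assumes orl: "orlicz_function \<phi>" and ms: "measure_setting CaseA M" and nd: "\<not> delta2 CaseA \<phi>"
  obtains c A where "sign_test_family M \<phi> n c A"
proof -
  have na: "nonatomic M" and sf: "sigma_finite_measure M" and inf: "emeasure M (space M) = \<infinity>"
    using ms by (auto simp: measure_setting_def)
  have "\<forall>K>0. \<exists>u\<ge>0. K * \<phi> u < \<phi> (2 * u)"
    using nd unfolding delta2_def by (simp add: not_le)
  then obtain u where "0 \<le> u" and gap: "2 ^ (n + 1) * \<phi> u < \<phi> (2 * u)"
    by (meson zero_less_numeral zero_less_power)
  then have u: "0 < u" by (rule orlicz_gap_pos[OF orl])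
  have pos: "0 < \<phi> (2 * u)" using orlicz_function_pos[OF orl] u by simp
  obtain E where E: "E \<in> sets M" "E \<subseteq> space M" "emeasure M E < \<infinity>"
    "ennreal (2 * 2 ^ n / \<phi> (2 * u)) < emeasure M E"
    by (rule sigma_finite_measure.approx_PInf_emeasure_with_finite[OF sf sets.top inf])
  then have E_fin: "E \<in> fmeasurable M" by (simp add: fmeasurable_def)
  then have "2 * 2 ^ n / \<phi> (2 * u) < measure M E"
    using E(4) pos by (simp add: emeasure_eq_measure2 ennreal_less_iff)
  then have "2 * 2 ^ n \<le> \<phi> (2 * u) * measure M E"
    using pos by (simp add: divide_less_eq mult.commute)
  with E_fin obtain A where "sign_test_family M \<phi> n (2 * u) A"
    using nonatomic_sign_test_family[OF orl na u less_imp_le[OF gap]] by blast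
  then show thesis by (rule that)
qed

lemma sign_test_family_CaseB:
  assumes orl: "orlicz_function \<phi>" and ms: "measure_setting CaseB M" and nd: "\<not> delta2 CaseB \<phi>"
  obtains c A where "sign_test_family M \<phi> n c A"
proof -
  define T where "T = measure M (space M)"
  have na: "nonatomic M" and fin: "emeasure M (space M) < \<infinity>" and pos: "0 < emeasure M (space M)"
    using ms by (auto simp: measure_setting_def)
  then have E: "space M \<in> fmeasurable M" by (simp add: fmeasurable_def)
  then have T: "0 < T" using pos by (simp add: T_def emeasure_eq_measure2)
  have "eventually (\<lambda>x. 2 * 2 ^ n / T \<le> \<phi> x) at_top"
    using orl unfolding orlicz_function_def by (auto simp: filterlim_at_top)
  then obtain v0 where v0: "\<And>x. v0 \<le> x \<Longrightarrow> 2 * 2 ^ n / T \<le> \<phi> x"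
    unfolding eventually_at_top_linorder by blast
  have "\<forall>K>0. \<forall>v\<ge>0. \<exists>u\<ge>v. K * \<phi> u < \<phi> (2 * u)"
    using nd unfolding delta2_def by (simp add: not_le) (meson not_less)
  then obtain u where uv: "max v0 0 \<le> u" and gap: "2 ^ (n + 1) * \<phi> u < \<phi> (2 * u)"
    by (meson max.cobounded2 zero_less_numeral zero_less_power)
  have u: "0 < u" using orlicz_gap_pos[OF orl _ gap] uv by simp
  have "2 * 2 ^ n / T \<le> \<phi> (2 * u)" using v0 uv by simp
  then have "2 * 2 ^ n \<le> \<phi> (2 * u) * T" using T by (simp add: divide_le_eq)
  then obtain A where "sign_test_family M \<phi> n (2 * u) A"
    using nonatomic_sign_test_family[OF orl na u less_imp_le[OF gap] E] unfolding T_def by blast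
  then show thesis by (rule that)
qed

lemma sign_test_family_CaseC:
  assumes orl: "orlicz_function \<phi>" and ms: "measure_setting CaseC M" and nd: "\<not> delta2 CaseC \<phi>"
  obtains c A where "sign_test_family M \<phi> n c A"
proof -
  have M: "M = count_space (space M)" and X: "infinite (space M)"
    using ms by (auto simp: measure_setting_def)
  obtain v where v: "0 < v" "\<phi> v \<le> 1" by (rule orlicz_function_exists_le_1[OF orl])
  have "\<forall>K>0. \<forall>v>0. \<exists>u. 0 \<le> u \<and> u \<le> v \<and> K * \<phi> u < \<phi> (2 * u)"
    using nd unfolding delta2_def by (simp add: not_le)
  then obtain u where "0 \<le> u" "u \<le> v / 2" and gap: "2 ^ (n + 1) * \<phi> u < \<phi> (2 * u)"
    using v(1) by (meson half_gt_zero zero_less_numeral zero_less_power)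
  moreover from this have u: "0 < u" using orlicz_gap_pos[OF orl] by blast
  ultimately have "\<phi> (2 * u) \<le> 1"
    using v orlicz_function_mono[OF orl, of "2 * u" v] by simp
  then obtain A where "sign_test_family M \<phi> n (2 * u) A"
    using count_space_sign_test_family[OF orl M X u less_imp_le[OF gap]] by blast
  then show thesis by (rule that)
qed

lemma sign_test_family_exists:
  assumes "measure_setting s M" "orlicz_function \<phi>" "\<not> delta2 s \<phi>"
  obtains c A where "sign_test_family M \<phi> n c A"
  using assms sign_test_family_CaseA sign_test_family_CaseB sign_test_family_CaseC
  by (cases s) blast+

lemma linear_exceeds_type_bound:
  fixes p K :: real
  assumes p: "1 < p"
  obtains n :: nat where "0 < n" "K * (real n * 2 powr p) powr (1/p) < real n"
proof -
  define q where "q = 1 - 1/p"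
  have q: "0 < q" using p by (simp add: q_def)
  obtain n :: nat where n: "(2 * \<bar>K\<bar> + 1) powr (1/q) < n"
    using reals_Archimedean2 by blast
  have "0 < (2 * \<bar>K\<bar> + 1) powr (1/q)" by simp
  with n have n_pos: "0 < real n" by linarith
  have "2 * \<bar>K\<bar> + 1 = ((2 * \<bar>K\<bar> + 1) powr (1/q)) powr q"
    using q by (simp add: powr_powr)
  also have "\<dots> < real n powr q"
    using n q by (intro powr_less_mono2) auto
  finally have Kq: "2 * \<bar>K\<bar> < real n powr q" by simp
  have "K * (real n * 2 powr p) powr (1/p) = 2 * K * real n powr (1/p)"
    using p by (simp add: powr_mult powr_powr)
  also have "\<dots> \<le> 2 * \<bar>K\<bar> * real n powr (1/p)"
    by (intro mult_right_mono) auto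
  also have "\<dots> < real n powr q * real n powr (1/p)"
    using Kq n_pos by (intro mult_strict_right_mono) auto
  also have "\<dots> = real n"
    using n_pos by (simp add: q_def flip: powr_add)
  finally show thesis using that n_pos by simp
qed

theorem mainTheorem9:
  fixes M :: "'a measure" and s :: msetting and \<phi> :: "real \<Rightarrow> real" and p :: real
  assumes "measure_setting s M"
    and "1 < p" and "p \<le> 2"
    and "orlicz_function \<phi>"
    and "0 < alpha_idx s \<phi>"
    and "orlicz_has_type M \<phi> p"
  shows "delta2 s \<phi>"
proof (rule ccontr)
  assume not_delta2: "\<not> delta2 s \<phi>"
  obtain K where K: "0 < K" and type: "orlicz_type_inequality M \<phi> p K"
    using assms(6) orlicz_has_type_iff by blast
  obtain n :: nat where n: "0 < n" and exceeds: "K * (real n * 2 powr p) powr (1/p) < real n"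
    using linear_exceeds_type_bound[OF assms(2)] by blast
  obtain c A where "sign_test_family M \<phi> n c A"
    using sign_test_family_exists[OF assms(1,4) not_delta2] by blast
  then have "real n \<le> K * (real n * 2 powr p) powr (1/p)"
    using assms(2) by (intro sign_test_family_type_bound[OF assms(4) _ n K _ type]) auto
  with exceeds show False by linarith
qed

end
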